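(* Let $p=2n+1$ be an odd prime, and write $\{1,\ldots,p-1\}=\{a_1,\ldots,a_n\}\cup\{b_1,\ldots,b_n\}$ with $a_1<\cdots<a_n$ and $b_1<\cdots<b_n$, where $a_1,\ldots,a_n$ are the quadratic residues modulo $p$ and $b_1,\ldots,b_n$ are the quadratic nonresidues modulo $p$ in $\{1,\ldots,p-1\}$. Then $$\prod_{1\le j<k\le n}(a_k-a_j)(b_k-b_j)\equiv\begin{cases}-n!\pmod p&\text{if } p\equiv1\pmod4,\\1\pmod p&\text{if } p\equiv3\pmod4.\end{cases}$$ *)

theory Defs
  imports "HOL-Number_Theory.Number_Theory"
begin

definition qr_list :: "int \<Rightarrow> int list" where
  "qr_list p = sorted_list_of_set {x \<in> {1..p-1}. QuadRes p x}"

definition qnr_list :: "int \<Rightarrow> int list" where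
  "qnr_list p = sorted_list_of_set {x \<in> {1..p-1}. \<not> QuadRes p x}"

end

theory Submission
  imports Defs "HOL-Computational_Algebra.Polynomial"
begin

(* Let A and B be the quadratic residues and nonresidues in {1..p-1} and
   V(S) = prod_{x<y in S} (y - x), so that the product in question is V(A) V(B).
   Splitting {1..2n} into A and B gives V({1..2n}) = +-V(A) V(B) prod_{a in A, b in B} (a - b).
   By Euler's criterion prod_{b in B} (X - b) = X^n + 1 and a^n = 1 (mod p) for a in A, so the
   cross product is 2^n = (2/p) (mod p); and V({1..2n}) = prod_{k<2n} k! = +-n! (mod p), pairing
   k! with (2n - k)! by Wilson's theorem. The remaining sign is the parity of the number of
   pairs a < b with a in A, b in B, which is controlled by the reflection x |-> p - x: it
   preserves A and B when p = 1 (mod 4) and swaps them when p = 3 (mod 4). In the latter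
   case also n! = (-1)^#{b in B. b <= n} (mod p), because prod A = 1 (mod p). *)

section \<open>Polynomial congruences modulo a prime\<close>

lemma poly_cong_0_if_roots_cong:
  fixes f :: "int poly" and p :: int
  assumes "prime p" "finite S" "inj_on (\<lambda>s. s mod p) S"
    and "\<And>s. s \<in> S \<Longrightarrow> [poly f s = 0] (mod p)" and "degree f < card S"
  shows "[poly f x = 0] (mod p)"
  using assms(2-5)
proof (induction S arbitrary: f rule: finite_induct)
  case empty
  then show ?case by simp
next
  case (insert r S)
  have root: "[poly f r = 0] (mod p)" using insert.prems by simp
  show ?case
  proof (cases "degree f = 0")
    case True
    then obtain c where "f = [:c:]" by (rule degree_eq_zeroE)
    then show ?thesis using root by simp
  next
    case False
    define q where "q = synthetic_div f r"
    have f_eq: "poly f y = (y - r) * poly q y + poly f r" for y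
      using arg_cong[OF synthetic_div_correct'[of r f], of "\<lambda>g. poly g y"]
      by (simp add: q_def algebra_simps)
    have "[poly q s = 0] (mod p)" if "s \<in> S" for s
    proof -
      have "[poly f s - poly f r = 0 - 0] (mod p)"
        using insert.prems(2) that root by (intro cong_diff) auto
      then have "[(s - r) * poly q s = 0] (mod p)" by (simp add: f_eq[of s])
      moreover have "s mod p \<noteq> r mod p"
        using insert.prems(1) insert.hyps(2) that by (auto simp: image_iff)
      then have "\<not> [s - r = 0] (mod p)" by (simp add: cong_0_iff mod_eq_dvd_iff)
      ultimately show ?thesis
        using assms(1) by (auto simp: cong_0_iff prime_dvd_mult_iff)
    qed
    moreover have "degree q < card S"
      using False insert by (simp add: q_def degree_synthetic_div)
    ultimately have "[poly q x = 0] (mod p)"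
      using insert.IH insert.prems(1) by (auto intro: inj_on_subset)
    then have "[(x - r) * poly q x + poly f r = (x - r) * 0 + 0] (mod p)"
      by (intro cong_add cong_mult cong_refl root)
    then show ?thesis by (simp add: f_eq[of x])
  qed
qed

lemma card_le_if_pow_cong:
  fixes p c :: int
  assumes "prime p" "finite S" "inj_on (\<lambda>s. s mod p) S" "m > 0"
    and "\<And>s. s \<in> S \<Longrightarrow> [s ^ m = c] (mod p)"
  shows "card S \<le> m"
proof (rule ccontr)
  assume "\<not> card S \<le> m"
  define f :: "int poly" where "f = monom 1 m - [:c:]"
  have poly_f: "poly f y = y ^ m - c" for y by (simp add: f_def poly_monom)
  have "degree f < card S"
    using \<open>\<not> card S \<le> m\<close> degree_diff_le[of "monom 1 m" m "[:c:]"]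
    by (simp add: f_def degree_monom_le)
  moreover have "[poly f s = 0] (mod p)" if "s \<in> S" for s
    using assms(5)[OF that] by (simp add: poly_f cong_iff_dvd_diff)
  ultimately have "[poly f x = 0] (mod p)" for x
    using poly_cong_0_if_roots_cong[OF assms(1-3)] by blast
  from this[of 1] this[of 0] have "p dvd 1 - c" "p dvd 0 - c"
    using assms(4) by (simp_all add: poly_f cong_0_iff power_0_left)
  then have "p dvd (1 - c) - (0 - c)" by (rule dvd_diff)
  with prime_gt_1_int[OF assms(1)] show False by simp
qed

lemma prod_diff_cong_if_pow_cong:
  fixes p c :: int
  assumes "prime p" "finite S" "inj_on (\<lambda>s. s mod p) S" "S \<noteq> {}"
    and "\<And>s. s \<in> S \<Longrightarrow> [s ^ card S = c] (mod p)"
  shows "[(\<Prod>s\<in>S. x - s) = x ^ card S - c] (mod p)"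
proof -
  define m where "m = card S"
  define g :: "int poly" where "g = (\<Prod>s\<in>S. [:-s, 1:])"
  define f :: "int poly" where "f = g - (monom 1 m - [:c:])"
  have poly_g: "poly g y = (\<Prod>s\<in>S. y - s)" for y by (simp add: g_def poly_prod)
  have poly_f: "poly f y = (\<Prod>s\<in>S. y - s) - (y ^ m - c)" for y
    by (simp add: f_def poly_g poly_monom)
  have "m > 0" using assms(2,4) by (simp add: m_def card_gt_0_iff)
  have deg_g: "degree g = m"
    unfolding g_def m_def by (simp add: degree_prod_eq_sum_degree)
  have "lead_coeff g = 1" by (simp add: g_def lead_coeff_prod)
  with deg_g \<open>m > 0\<close> have "coeff f m = 0" by (cases m) (simp_all add: f_def)
  moreover have "degree f \<le> m"
    unfolding f_def by (intro degree_diff_le) (simp_all add: deg_g degree_monom_le)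
  ultimately have "f = 0 \<or> degree f < m"
    by (metis le_neq_implies_less leading_coeff_0_iff)
  with \<open>m > 0\<close> have "degree f < card S" by (auto simp: m_def)
  moreover have "[poly f s = 0] (mod p)" if "s \<in> S" for s
  proof -
    have "(\<Prod>t\<in>S. s - t) = 0" using assms(2) that by (intro prod_zero) auto
    then show ?thesis
      using assms(5)[OF that] by (simp add: poly_f m_def cong_iff_dvd_diff dvd_diff_commute)
  qed
  ultimately have "[poly f x = 0] (mod p)"
    using poly_cong_0_if_roots_cong[OF assms(1-3)] by blast
  then show ?thesis by (simp add: poly_f m_def cong_iff_dvd_diff)
qed

section \<open>Vandermonde products of sets\<close>

definition vandermonde_prod :: "'a::linordered_idom set \<Rightarrow> 'a" where
  "vandermonde_prod S = (\<Prod>(x, y) \<in> {(x, y). x \<in> S \<and> y \<in> S \<and> x < y}. y - x)"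

lemma vandermonde_prod_sorted_list_of_set:
  fixes S :: "'a::linordered_idom set"
  assumes "finite S"
  defines "xs \<equiv> sorted_list_of_set S"
  shows "(\<Prod>k<card S. \<Prod>j<k. xs ! k - xs ! j) = vandermonde_prod S"
proof -
  have len: "length xs = card S" and set_xs: "set xs = S" and sorted: "sorted_wrt (<) xs"
    using assms by (simp_all add: xs_def)
  have bij: "bij_betw (\<lambda>(k, j). (xs ! j, xs ! k)) (SIGMA k:{..<card S}. {..<k})
               {(x, y). x \<in> S \<and> y \<in> S \<and> x < y}"
  proof (rule bij_betw_imageI)
    show "inj_on (\<lambda>(k, j). (xs ! j, xs ! k)) (SIGMA k:{..<card S}. {..<k})"
      using sorted len by (auto simp: inj_on_def nth_eq_iff_index_eq strict_sorted_iff)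
    show "(\<lambda>(k, j). (xs ! j, xs ! k)) ` (SIGMA k:{..<card S}. {..<k}) =
          {(x, y). x \<in> S \<and> y \<in> S \<and> x < y}"
    proof (intro equalityI subsetI)
      fix z assume "z \<in> (\<lambda>(k, j). (xs ! j, xs ! k)) ` (SIGMA k:{..<card S}. {..<k})"
      then show "z \<in> {(x, y). x \<in> S \<and> y \<in> S \<and> x < y}"
        using sorted_wrt_nth_less[OF sorted] len by (auto simp flip: set_xs)
    next
      fix z assume "z \<in> {(x, y). x \<in> S \<and> y \<in> S \<and> x < y}"
      then obtain j k where "z = (xs ! j, xs ! k)" "j < card S" "k < card S" "xs ! j < xs ! k"
        by (auto simp flip: set_xs simp: in_set_conv_nth len)
      moreover from this have "j < k"
        using sorted len by (metis not_less_iff_gr_or_eq sorted_wrt_nth_less)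
      ultimately show "z \<in> (\<lambda>(k, j). (xs ! j, xs ! k)) ` (SIGMA k:{..<card S}. {..<k})"
        by force
    qed
  qed
  have "(\<Prod>k<card S. \<Prod>j<k. xs ! k - xs ! j) =
        (\<Prod>(k, j) \<in> (SIGMA k:{..<card S}. {..<k}). xs ! k - xs ! j)"
    by (simp add: prod.Sigma)
  also have "\<dots> = vandermonde_prod S"
    unfolding vandermonde_prod_def
    using prod.reindex_bij_betw[OF bij, of "\<lambda>(x, y). y - x"] by (simp add: case_prod_beta')
  finally show ?thesis .
qed

lemma vandermonde_prod_Un:
  fixes S T :: "'a::linordered_idom set"
  assumes "finite S" "finite T" "S \<inter> T = {}"
  shows "vandermonde_prod (S \<union> T) =
           vandermonde_prod S * vandermonde_prod T * (\<Prod>x\<in>S. \<Prod>y\<in>T. \<bar>y - x\<bar>)"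
proof -
  define P where "P U = {(x, y). x \<in> U \<and> y \<in> U \<and> x < y}" for U :: "'a set"
  define M where "M = {(x, y). x < y \<and> (x \<in> S \<and> y \<in> T \<or> x \<in> T \<and> y \<in> S)}"
  have fin_P: "finite (P U)" if "finite U" for U
    by (rule finite_subset[of _ "U \<times> U"]) (auto simp: P_def that)
  have "finite M"
    by (rule finite_subset[of _ "(S \<union> T) \<times> (S \<union> T)"]) (auto simp: M_def assms)
  have bij: "bij_betw (\<lambda>(s, t). (min s t, max s t)) (S \<times> T) M"
  proof (rule bij_betw_byWitness[where f' = "\<lambda>(x, y). if x \<in> S then (x, y) else (y, x)"])
    show "(\<lambda>(s, t). (min s t, max s t)) ` (S \<times> T) \<subseteq> M"
    proof clarify
      fix s t assume "s \<in> S" "t \<in> T"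
      with assms(3) have "s \<noteq> t" by auto
      with \<open>s \<in> S\<close> \<open>t \<in> T\<close> show "(min s t, max s t) \<in> M"
        by (cases "s < t") (auto simp: M_def min_def max_def)
    qed
    show "(\<lambda>(x, y). if x \<in> S then (x, y) else (y, x)) ` M \<subseteq> S \<times> T"
      using assms(3) by (auto simp: M_def split: if_splits)
  qed (use assms(3) in \<open>auto simp: M_def min_def max_def\<close>)
  have "(\<Prod>(x, y)\<in>M. y - x) = (\<Prod>(s, t)\<in>S \<times> T. max s t - min s t)"
    using prod.reindex_bij_betw[OF bij, of "\<lambda>(x, y). y - x"] by (simp add: case_prod_beta')
  also have "\<dots> = (\<Prod>x\<in>S. \<Prod>y\<in>T. \<bar>y - x\<bar>)"
    unfolding prod.cartesian_product by (intro prod.cong) (auto simp: max_def min_def)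
  finally have cross: "(\<Prod>(x, y)\<in>M. y - x) = (\<Prod>x\<in>S. \<Prod>y\<in>T. \<bar>y - x\<bar>)" .
  have "P (S \<union> T) = P S \<union> P T \<union> M" by (auto simp: P_def M_def)
  moreover have "P S \<inter> P T = {}" "(P S \<union> P T) \<inter> M = {}"
    using assms(3) by (auto simp: P_def M_def)
  ultimately have "vandermonde_prod (S \<union> T) =
      vandermonde_prod S * vandermonde_prod T * (\<Prod>(x, y)\<in>M. y - x)"
    unfolding vandermonde_prod_def P_def[symmetric]
    by (simp add: prod.union_disjoint fin_P \<open>finite M\<close> assms)
  with cross show ?thesis by simp
qed

lemma prod_abs_diff_eq_sign_prod_diff:
  fixes S T :: "'a::linordered_idom set"
  assumes "finite S" "finite T" "S \<inter> T = {}"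
  shows "(\<Prod>x\<in>S. \<Prod>y\<in>T. \<bar>y - x\<bar>) =
           (-1) ^ card {(x, y) \<in> S \<times> T. x < y} * (\<Prod>x\<in>S. \<Prod>y\<in>T. x - y)"
proof -
  have "(\<Prod>x\<in>S. \<Prod>y\<in>T. \<bar>y - x\<bar>) =
        (\<Prod>(x, y)\<in>S \<times> T. (if x < y then -1 else 1) * (x - y))"
    unfolding prod.cartesian_product using assms(3)
    by (intro prod.cong) (auto simp: abs_if)
  also have "\<dots> = (\<Prod>(x, y)\<in>S \<times> T. if x < y then -1 else 1) * (\<Prod>(x, y)\<in>S \<times> T. x - y)"
    by (simp add: prod.distrib case_prod_beta')
  also have "(\<Prod>(x, y)\<in>S \<times> T. if x < y then -1 else 1) = ((-1 :: 'a) ^ card {(x, y) \<in> S \<times> T. x < y})"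
  proof -
    have "{(x, y) \<in> S \<times> T. x < y} = S \<times> T \<inter> {z. fst z < snd z}" by auto
    then show ?thesis using assms(1,2) by (simp add: prod.If_cases case_prod_beta')
  qed
  finally show ?thesis by (simp add: prod.cartesian_product)
qed

lemma prod_atLeastAtMost_int_eq_fact: "(\<Prod>x\<in>{1..int m}. x) = fact m"
  by (simp add: fact_prod prod_int_eq)

lemma vandermonde_prod_singleton: "vandermonde_prod {x} = 1"
proof -
  have "{(a, b). a \<in> {x} \<and> b \<in> {x} \<and> a < b} = {}" by auto
  then show ?thesis by (simp only: vandermonde_prod_def prod.empty)
qed

lemma vandermonde_prod_atLeastAtMost: "vandermonde_prod {1..int m} = (\<Prod>k<m. fact k)"
proof (induction m)
  case 0
  then show ?case by (simp add: vandermonde_prod_def)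
next
  case (Suc m)
  have "{1..int (Suc m)} = {1..int m} \<union> {int m + 1}" by auto
  then have "vandermonde_prod {1..int (Suc m)} =
      vandermonde_prod {1..int m} * (\<Prod>x\<in>{1..int m}. \<bar>int m + 1 - x\<bar>)"
    using vandermonde_prod_Un[of "{1..int m}" "{int m + 1}"] by (simp add: vandermonde_prod_singleton)
  also have "(\<Prod>x\<in>{1..int m}. \<bar>int m + 1 - x\<bar>) = (\<Prod>x\<in>{1..int m}. x)"
    by (rule prod.reindex_bij_witness[of _ "\<lambda>x. int m + 1 - x" "\<lambda>x. int m + 1 - x"]) auto
  finally show ?case using Suc by (simp add: prod_atLeastAtMost_int_eq_fact)
qed

section \<open>Wilson's theorem and Gauss's lemma modulo \<open>2 * n + 1\<close>\<close>

lemma fact_mult_fact_complement_cong: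
  fixes q :: nat
  assumes "prime q" "j < q"
  shows "[fact j * fact (q - 1 - j) = (-1::int) ^ (j + 1)] (mod int q)"
  using assms(2)
proof (induction j)
  case 0
  then show ?case using wilson_theorem[OF assms(1)] by simp
next
  case (Suc j)
  define r where "r = q - 1 - Suc j"
  define X :: int where "X = fact (Suc j) * fact r"
  have r: "q - 1 - j = Suc r" using Suc.prems by (simp add: r_def)
  have "[- int (Suc j) = int (q - 1 - j)] (mod int q)"
    using Suc.prems by (simp add: cong_iff_dvd_diff)
  from cong_mult[OF this cong_refl[of X]]
  have "[int (Suc j) * (- X) = int (q - 1 - j) * X] (mod int q)"
    by (simp only: mult_minus_left mult_minus_right)
  also have "int (q - 1 - j) * X = int (Suc j) * (fact j * fact (q - 1 - j))"
    unfolding r X_def by (simp add: algebra_simps)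
  also have "[\<dots> = int (Suc j) * (-1) ^ (j + 1)] (mod int q)"
    using Suc by (intro cong_scalar_left) simp
  finally have "[int (Suc j) * (- X) = int (Suc j) * (-1) ^ (j + 1)] (mod int q)" .
  moreover have "\<not> q dvd Suc j" using Suc.prems by (auto dest: dvd_imp_le)
  then have "coprime (int (Suc j)) (int q)"
    using prime_imp_coprime[OF assms(1)] by (metis coprime_commute coprime_int_iff)
  ultimately have "[- X = (-1) ^ (j + 1)] (mod int q)"
    by (simp only: cong_mult_lcancel)
  then show ?case by (simp add: X_def r_def cong_minus_minus_iff flip: cong_minus_minus_iff[of X])
qed

lemma prod_fact_lessThan_cong:
  fixes q n :: nat
  assumes "prime q" "q = 2 * n + 1"
  shows "[(\<Prod>k<2 * n. fact k) = fact n * (-1::int) ^ (\<Sum>j\<in>{1..<n}. j + 1)] (mod int q)"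
proof -
  have "n > 0" using prime_gt_1_nat[OF assms(1)] assms(2) by simp
  have split: "{..<2 * n} = {..<n} \<union> ({n} \<union> {n + 1..<2 * n})" using \<open>n > 0\<close> by auto
  have "(\<Prod>k<2 * n. fact k :: int) = (\<Prod>k<n. fact k) * (fact n * (\<Prod>k\<in>{n + 1..<2 * n}. fact k))"
    unfolding split by (subst prod.union_disjoint; auto)+
  also have "{..<n} = insert 0 {1..<n}" using \<open>n > 0\<close> by auto
  also have "(\<Prod>k\<in>{n + 1..<2 * n}. fact k :: int) = (\<Prod>j\<in>{1..<n}. fact (2 * n - j))"
    by (rule prod.reindex_bij_witness[of _ "\<lambda>k. 2 * n - k" "\<lambda>j. 2 * n - j"]) auto
  finally have "(\<Prod>k<2 * n. fact k :: int) = fact n * (\<Prod>j\<in>{1..<n}. fact j * fact (2 * n - j))"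
    by (simp add: prod.distrib)
  also have "[\<dots> = fact n * (\<Prod>j\<in>{1..<n}. (-1) ^ (j + 1))] (mod int q)"
    using fact_mult_fact_complement_cong[OF assms(1)] assms(2)
    by (intro cong_scalar_left cong_prod) simp
  finally show ?thesis by (simp add: power_sum)
qed

lemma two_pow_half_cong:
  fixes q n :: nat
  assumes "prime q" "q = 2 * n + 1"
  shows "[2 ^ n = (-1::int) ^ (n - n div 2)] (mod int q)"
proof -
  have "n > 0" using prime_gt_1_nat[OF assms(1)] assms(2) by simp
  have "\<not> int q dvd 2" using assms(2) \<open>n > 0\<close> by (auto dest: zdvd_imp_le)
  then interpret GAUSS q 2
    using assms \<open>n > 0\<close> by unfold_locales (auto simp: cong_0_iff)
  have half: "(int q - 1) div 2 = int n" using assms(2) by simp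
  have "x mod int q = x" if "x \<in> B" for x
    using that assms(2) unfolding B_def A_def half by auto
  then have "C = B" unfolding C_def by (simp add: image_cong)
  \<comment> \<open>Gauss's lemma for \<open>a = 2\<close>: \<open>2 * x\<close> exceeds \<open>n\<close> exactly for \<open>n div 2 < x \<le> n\<close>.\<close>
  then have "E = (\<lambda>x. x * 2) ` {int (n div 2) + 1..int n}"
    unfolding E_def B_def A_def half by (auto simp: image_iff)
  then have "card E = n - n div 2"
    by (simp add: card_image inj_on_def)
  moreover have "[Legendre 2 (int q) = 2 ^ n] (mod int q)"
    using euler_criterion[OF assms(1)] assms(2) \<open>n > 0\<close> by simp
  ultimately show ?thesis using gauss_lemma by (simp add: cong_sym)
qed

(* The signs in prod_fact_lessThan_cong and two_pow_half_cong always multiply to -1. *)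
lemma odd_sum_Suc_add_half:
  fixes n :: nat
  shows "n > 0 \<Longrightarrow> odd ((\<Sum>j\<in>{1..<n}. j + 1) + (n - n div 2))"
proof (induction n rule: nat_induct_non_zero)
  case (Suc n)
  have "(\<Sum>j\<in>{1..<Suc n}. j + 1) = (\<Sum>j\<in>{1..<n}. j + 1) + (n + 1)"
    using Suc.hyps by (simp add: sum.atLeastLessThan_Suc)
  moreover have "Suc n - Suc n div 2 = (n - n div 2) + (if even n then 1 else 0)"
    by (auto elim: evenE oddE)
  ultimately show ?case using Suc.IH by auto
qed simp

lemma cong_mult_minus_one_power_iff:
  fixes a b m :: int
  shows "[a * (-1) ^ k = b] (mod m) \<longleftrightarrow> [a = b * (-1) ^ k] (mod m)"
  by (cases "even k") (simp_all add: cong_iff_dvd_diff add.commute flip: dvd_minus_iff[of m "- a - b"])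

section \<open>Reflection \<open>x \<mapsto> r - x\<close>\<close>

lemma card_less_pairs_reflect:
  fixes S T :: "'a::linordered_idom set"
  assumes "finite S" "finite T" "S \<inter> T = {}"
    and "\<And>x. x \<in> S \<Longrightarrow> r - x \<in> S" "\<And>y. y \<in> T \<Longrightarrow> r - y \<in> T"
  shows "2 * card {(x, y) \<in> S \<times> T. x < y} = card S * card T"
proof -
  define X where "X = {(x, y) \<in> S \<times> T. x < y}"
  define Y where "Y = {(x, y) \<in> S \<times> T. y < x}"
  have "bij_betw (\<lambda>(x, y). (r - x, r - y)) X Y"
    by (rule bij_betw_byWitness[where f' = "\<lambda>(x, y). (r - x, r - y)"])
      (use assms in \<open>auto simp: X_def Y_def\<close>)
  then have "card X = card Y" by (rule bij_betw_same_card)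
  moreover have "X \<union> Y = S \<times> T" "X \<inter> Y = {}" using assms(3) by (auto simp: X_def Y_def)
  moreover have "finite X" "finite Y"
    by (rule finite_subset[of _ "S \<times> T"], auto simp: X_def Y_def assms)+
  ultimately show ?thesis
    unfolding X_def[symmetric] by (metis card_Un_disjoint card_cartesian_product mult_2)
qed

lemma even_card_less_pairs_reflect_swap:
  fixes S T :: "'a::linordered_idom set"
  assumes "finite S" "finite T"
    and "\<And>x. x \<in> S \<Longrightarrow> r - x \<in> T" "\<And>y. y \<in> T \<Longrightarrow> r - y \<in> S"
  shows "even (card {(x, y) \<in> S \<times> T. x < y} + card {x \<in> S. 2 * x < r})"
proof -
  define X where "X = {(x, y) \<in> S \<times> T. x < y}"
  define X1 where "X1 = {(x, y) \<in> X. x + y < r}"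
  define X2 where "X2 = {(x, y) \<in> X. x + y > r}"
  define F where "F = {(x, y) \<in> X. x + y = r}"
  have "finite X" by (rule finite_subset[of _ "S \<times> T"]) (auto simp: X_def assms)
  have "bij_betw (\<lambda>(x, y). (r - y, r - x)) X1 X2"
    by (rule bij_betw_byWitness[where f' = "\<lambda>(x, y). (r - y, r - x)"])
      (use assms in \<open>auto simp: X_def X1_def X2_def\<close>)
  then have "card X1 = card X2" by (rule bij_betw_same_card)
  have "F = (\<lambda>x. (x, r - x)) ` {x \<in> S. 2 * x < r}"
    using assms(3) by (auto simp: F_def X_def image_iff)
  then have "card F = card {x \<in> S. 2 * x < r}"
    by (simp add: card_image inj_on_def)
  have "X = X1 \<union> X2 \<union> F" "X1 \<inter> X2 = {}" "(X1 \<union> X2) \<inter> F = {}"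
    by (auto simp: X1_def X2_def F_def)
  with \<open>finite X\<close> have "card X = card X1 + card X2 + card F"
    by (simp add: card_Un_disjoint)
  with \<open>card X1 = card X2\<close> \<open>card F = card {x \<in> S. 2 * x < r}\<close> show ?thesis
    by (simp add: X_def)
qed

lemma prod_reflect_swap_cong:
  fixes A B :: "int set" and p :: int and n :: nat
  assumes "p = 2 * int n + 1" "A \<union> B = {1..int (2 * n)}" "A \<inter> B = {}"
    and "\<And>x. x \<in> A \<Longrightarrow> p - x \<in> B" "\<And>y. y \<in> B \<Longrightarrow> p - y \<in> A"
  shows "[(\<Prod>x\<in>A. x) = (-1) ^ card {y \<in> B. y \<le> int n} * fact n] (mod p)"
proof -
  define A_low where "A_low = {x \<in> A. x \<le> int n}"
  define B_low where "B_low = {y \<in> B. y \<le> int n}"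
  have "finite (A \<union> B)" using assms(2) by simp
  then have fin: "finite A_low" "finite B_low" by (simp_all add: A_low_def B_low_def)
  have "A = A_low \<union> (\<lambda>y. p - y) ` B_low"
  proof (intro equalityI subsetI)
    fix x assume "x \<in> A"
    then have "x \<in> A_low \<or> p - x \<in> B_low \<and> x = p - (p - x)"
      using assms(1,2,4) by (auto simp: A_low_def B_low_def)
    then show "x \<in> A_low \<union> (\<lambda>y. p - y) ` B_low" by blast
  qed (use assms(5) in \<open>auto simp: A_low_def B_low_def\<close>)
  moreover have "A_low \<inter> (\<lambda>y. p - y) ` B_low = {}"
    using assms(1) by (auto simp: A_low_def B_low_def)
  ultimately have "(\<Prod>x\<in>A. x) = (\<Prod>x\<in>A_low. x) * (\<Prod>y\<in>B_low. p - y)"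
    using fin by (simp add: prod.union_disjoint prod.reindex inj_on_def)
  also have "[\<dots> = (\<Prod>x\<in>A_low. x) * (\<Prod>y\<in>B_low. (-1) * y)] (mod p)"
    by (intro cong_scalar_left cong_prod) (simp add: cong_iff_dvd_diff)
  also have "(\<Prod>y\<in>B_low. (-1) * y) = (-1) ^ card B_low * (\<Prod>y\<in>B_low. y)"
    by (simp only: prod.distrib prod_constant)
  also have "(\<Prod>x\<in>A_low. x) * (\<dots>) = (-1) ^ card B_low * (\<Prod>x\<in>A_low \<union> B_low. x)"
  proof -
    have "A_low \<inter> B_low = {}" using assms(3) by (auto simp: A_low_def B_low_def)
    then show ?thesis using fin by (simp add: prod.union_disjoint)
  qed
  also have "A_low \<union> B_low = {x \<in> A \<union> B. x \<le> int n}"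
    by (auto simp: A_low_def B_low_def)
  also have "\<dots> = {1..int n}"
    unfolding assms(2) by auto
  finally show ?thesis by (simp add: B_low_def prod_atLeastAtMost_int_eq_fact)
qed

section \<open>Quadratic residues modulo \<open>p = 2 * n + 1\<close>\<close>

locale odd_prime =
  fixes p :: int and n :: nat
  assumes prime: "prime p" and p_eq: "p = 2 * int n + 1"
begin

definition qr_set :: "int set" where
  "qr_set = {x \<in> {1..p - 1}. QuadRes p x}"

definition qnr_set :: "int set" where
  "qnr_set = {x \<in> {1..p - 1}. \<not> QuadRes p x}"

lemma n_pos: "n > 0"
  using prime_gt_1_int[OF prime] p_eq by simp

lemma prime_nat: "prime (nat p)"
  using prime by simp

lemma nat_p_eq: "nat p = 2 * n + 1"
  using p_eq by simp

lemma p_cong_1_mod_4_iff: "[p = 1] (mod 4) \<longleftrightarrow> even n"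
proof -
  have "[p = 1] (mod 4) \<longleftrightarrow> 2 * 2 dvd 2 * int n" by (simp add: cong_iff_dvd_diff p_eq)
  also have "\<dots> \<longleftrightarrow> even n" by (subst dvd_times_left_cancel_iff) simp_all
  finally show ?thesis .
qed

lemma qr_set_Un_qnr_set: "qr_set \<union> qnr_set = {1..int (2 * n)}"
  and qr_set_Int_qnr_set: "qr_set \<inter> qnr_set = {}"
  unfolding qr_set_def qnr_set_def using p_eq by auto

lemma finite_qr_set [simp]: "finite qr_set"
  and finite_qnr_set [simp]: "finite qnr_set"
  unfolding qr_set_def qnr_set_def by (rule finite_subset[of _ "{1..p - 1}"], auto)+

lemma inj_on_mod_p: "A \<subseteq> {1..p - 1} \<Longrightarrow> inj_on (\<lambda>x. x mod p) A"
  by (rule inj_on_subset[of _ "{1..p - 1}"]) (auto simp: inj_on_def)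

lemma pow_half_cong:
  assumes "x \<in> {1..p - 1}"
  shows "[x ^ n = (if QuadRes p x then 1 else -1)] (mod p)"
proof -
  have "\<not> p dvd x" using assms by (auto dest: zdvd_imp_le)
  then have "Legendre x p = (if QuadRes p x then 1 else -1)"
    by (simp add: Legendre_def cong_0_iff)
  moreover have "[Legendre x p = x ^ n] (mod p)"
    using euler_criterion[OF prime_nat, of x] nat_p_eq n_pos p_eq by simp
  ultimately show ?thesis by (simp add: cong_sym)
qed

lemma one_not_cong_minus_one: "\<not> [1 = -1] (mod p)"
  using p_eq n_pos by (auto simp: cong_iff_dvd_diff dest: zdvd_imp_le)

lemma mem_qr_set_iff: "x \<in> {1..p - 1} \<Longrightarrow> x \<in> qr_set \<longleftrightarrow> [x ^ n = 1] (mod p)"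
  using pow_half_cong[of x] one_not_cong_minus_one
  by (cases "QuadRes p x") (simp_all add: qr_set_def, metis cong_sym cong_trans)

lemma mem_qnr_set_iff: "x \<in> {1..p - 1} \<Longrightarrow> x \<in> qnr_set \<longleftrightarrow> [x ^ n = -1] (mod p)"
  using pow_half_cong[of x] one_not_cong_minus_one
  by (cases "QuadRes p x") (simp_all add: qnr_set_def, metis cong_sym cong_trans)

lemma qr_set_subset: "qr_set \<subseteq> {1..p - 1}"
  and qnr_set_subset: "qnr_set \<subseteq> {1..p - 1}"
  by (auto simp: qr_set_def qnr_set_def)

lemma qr_pow_cong: "x \<in> qr_set \<Longrightarrow> [x ^ n = 1] (mod p)"
  and qnr_pow_cong: "x \<in> qnr_set \<Longrightarrow> [x ^ n = -1] (mod p)"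
  using pow_half_cong[of x] by (auto simp: qr_set_def qnr_set_def)

lemma card_qr_set: "card qr_set = n"
  and card_qnr_set: "card qnr_set = n"
proof -
  have "card qr_set \<le> n"
    using card_le_if_pow_cong[OF prime finite_qr_set inj_on_mod_p[OF qr_set_subset] n_pos qr_pow_cong] .
  moreover have "card qnr_set \<le> n"
    using card_le_if_pow_cong[OF prime finite_qnr_set inj_on_mod_p[OF qnr_set_subset] n_pos qnr_pow_cong] .
  moreover have "card qr_set + card qnr_set = 2 * n"
    using card_Un_disjoint[of qr_set qnr_set] qr_set_Un_qnr_set qr_set_Int_qnr_set by simp
  ultimately show "card qr_set = n" "card qnr_set = n" by simp_all
qed

lemma reflect_pow_cong: "[(p - x) ^ n = (-1) ^ n * x ^ n] (mod p)"
proof -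
  have "[p - x = - x] (mod p)" by (simp add: cong_iff_dvd_diff)
  then have "[(p - x) ^ n = (- x) ^ n] (mod p)" by (rule cong_pow)
  then show ?thesis by (simp only: power_minus[of x n])
qed

lemma reflect_mem_qr_set_iff:
  assumes "x \<in> {1..p - 1}"
  shows "p - x \<in> qr_set \<longleftrightarrow> (x \<in> qr_set \<longleftrightarrow> even n)"
proof -
  have "p - x \<in> {1..p - 1}" using assms by auto
  show ?thesis
  proof (cases "even n")
    case True
    then have "[(p - x) ^ n = x ^ n] (mod p)" using reflect_pow_cong[of x] by simp
    with True show ?thesis
      using mem_qr_set_iff[OF assms] mem_qr_set_iff[OF \<open>p - x \<in> {1..p - 1}\<close>]
      by (meson cong_sym cong_trans)
  next
    case False
    then have "[(p - x) ^ n = - (x ^ n)] (mod p)" using reflect_pow_cong[of x] by simp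
    then have "[(p - x) ^ n = 1] (mod p) \<longleftrightarrow> [x ^ n = -1] (mod p)"
      by (metis cong_minus_minus_iff cong_sym cong_trans minus_minus)
    with False show ?thesis
      using mem_qr_set_iff[OF \<open>p - x \<in> {1..p - 1}\<close>] mem_qnr_set_iff[OF assms]
        qr_set_Int_qnr_set qr_set_Un_qnr_set assms p_eq
      by auto
  qed
qed

lemma reflect_mem_qnr_set_iff:
  assumes "x \<in> {1..p - 1}"
  shows "p - x \<in> qnr_set \<longleftrightarrow> (x \<in> qnr_set \<longleftrightarrow> even n)"
proof -
  have "y \<in> qnr_set \<longleftrightarrow> y \<notin> qr_set" if "y \<in> {1..p - 1}" for y
    using that by (auto simp: qr_set_def qnr_set_def)
  moreover have "p - x \<in> {1..p - 1}" using assms by auto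
  ultimately show ?thesis using reflect_mem_qr_set_iff[OF assms] assms by blast
qed

lemma prod_qnr_diff_cong: "x \<in> qr_set \<Longrightarrow> [(\<Prod>y\<in>qnr_set. x - y) = 2] (mod p)"
proof -
  assume "x \<in> qr_set"
  have "[(\<Prod>y\<in>qnr_set. x - y) = x ^ card qnr_set - (-1)] (mod p)"
    by (rule prod_diff_cong_if_pow_cong[OF prime finite_qnr_set inj_on_mod_p[OF qnr_set_subset]])
      (use qnr_pow_cong card_qnr_set n_pos in auto)
  also have "x ^ card qnr_set = x ^ n" by (simp only: card_qnr_set)
  also have "[x ^ n - (-1) = 1 - (-1)] (mod p)"
    using \<open>x \<in> qr_set\<close> by (intro cong_diff cong_refl qr_pow_cong)
  finally show ?thesis by simp
qed

lemma prod_qr_cong_odd: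
  assumes "odd n"
  shows "[(\<Prod>x\<in>qr_set. x) = 1] (mod p)"
proof -
  have "[(\<Prod>x\<in>qr_set. 0 - x) = 0 ^ card qr_set - 1] (mod p)"
    by (rule prod_diff_cong_if_pow_cong[OF prime finite_qr_set inj_on_mod_p[OF qr_set_subset]])
      (use qr_pow_cong card_qr_set n_pos in auto)
  moreover have "(\<Prod>x\<in>qr_set. 0 - x) = - (\<Prod>x\<in>qr_set. x)"
    using assms by (simp add: prod_uminus card_qr_set)
  ultimately show ?thesis
    using n_pos by (simp add: card_qr_set power_0_left cong_minus_minus_iff[of _ 1, symmetric])
qed

lemma qr_list_eq: "qr_list p = sorted_list_of_set qr_set"
  and qnr_list_eq: "qnr_list p = sorted_list_of_set qnr_set"
  by (simp_all add: qr_list_def qnr_list_def qr_set_def qnr_set_def)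

lemma vandermonde_prod_qr_qnr_cong:
  "[vandermonde_prod qr_set * vandermonde_prod qnr_set =
    - fact n * (-1) ^ card {(x, y) \<in> qr_set \<times> qnr_set. x < y}] (mod p)"
proof -
  define N where "N = card {(x, y) \<in> qr_set \<times> qnr_set. x < y}"
  define V where "V = vandermonde_prod qr_set * vandermonde_prod qnr_set"
  have int_nat_p: "int (nat p) = p" using p_eq by simp
  have "[(\<Prod>x\<in>qr_set. \<Prod>y\<in>qnr_set. x - y) = (\<Prod>x\<in>qr_set. 2)] (mod p)"
    by (intro cong_prod prod_qnr_diff_cong)
  also have "(\<Prod>x\<in>qr_set. 2) = (2 :: int) ^ n" by (simp add: card_qr_set)
  also have "[(2 :: int) ^ n = (-1) ^ (n - n div 2)] (mod p)"
    using two_pow_half_cong[OF prime_nat nat_p_eq] by (simp only: int_nat_p)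
  finally have cross: "[(\<Prod>x\<in>qr_set. \<Prod>y\<in>qnr_set. x - y) = (-1) ^ (n - n div 2)] (mod p)" .
  have "[V * (-1) ^ N * (-1) ^ (n - n div 2) =
      V * ((-1) ^ N * (\<Prod>x\<in>qr_set. \<Prod>y\<in>qnr_set. x - y))] (mod p)"
    unfolding mult.assoc by (intro cong_scalar_left) (rule cong_sym[OF cross])
  also have "V * ((-1) ^ N * (\<Prod>x\<in>qr_set. \<Prod>y\<in>qnr_set. x - y)) = vandermonde_prod {1..int (2 * n)}"
    using vandermonde_prod_Un[OF finite_qr_set finite_qnr_set qr_set_Int_qnr_set]
      prod_abs_diff_eq_sign_prod_diff[OF finite_qr_set finite_qnr_set qr_set_Int_qnr_set]
    by (simp add: qr_set_Un_qnr_set V_def N_def mult.assoc)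
  also have "\<dots> = (\<Prod>k<2 * n. fact k)"
    by (rule vandermonde_prod_atLeastAtMost)
  also have "[\<dots> = fact n * (-1) ^ (\<Sum>j\<in>{1..<n}. j + 1)] (mod p)"
    using prod_fact_lessThan_cong[OF prime_nat nat_p_eq] by (simp only: int_nat_p)
  finally have "[V * (-1) ^ N * (-1) ^ (n - n div 2) = fact n * (-1) ^ (\<Sum>j\<in>{1..<n}. j + 1)] (mod p)"
    by (simp only: mult.assoc)
  then have "[V * (-1) ^ N = fact n * (-1) ^ (\<Sum>j\<in>{1..<n}. j + 1) * (-1) ^ (n - n div 2)] (mod p)"
    by (rule cong_mult_minus_one_power_iff[THEN iffD1])
  also have "fact n * (-1) ^ (\<Sum>j\<in>{1..<n}. j + 1) * (-1) ^ (n - n div 2) = - (fact n :: int)"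
    using neg_one_odd_power[OF odd_sum_Suc_add_half[OF n_pos], where 'a = int]
    by (simp only: power_add mult.assoc mult_minus1_right)
  finally show ?thesis
    by (simp only: cong_mult_minus_one_power_iff V_def N_def)
qed

lemma vandermonde_prod_qr_qnr_cong_even:
  assumes "even n"
  shows "[vandermonde_prod qr_set * vandermonde_prod qnr_set = - fact n] (mod p)"
proof -
  define N where "N = card {(x, y) \<in> qr_set \<times> qnr_set. x < y}"
  have "x \<in> qr_set \<Longrightarrow> p - x \<in> qr_set" "x \<in> qnr_set \<Longrightarrow> p - x \<in> qnr_set" for x
    using assms reflect_mem_qr_set_iff reflect_mem_qnr_set_iff qr_set_subset qnr_set_subset by blast+
  from card_less_pairs_reflect[OF finite_qr_set finite_qnr_set qr_set_Int_qnr_set this]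
  have "2 * N = n * n" by (simp add: N_def card_qr_set card_qnr_set)
  moreover obtain m where "n = 2 * m" using assms by blast
  ultimately have "even N" by simp
  then show ?thesis using vandermonde_prod_qr_qnr_cong by (simp add: N_def)
qed

lemma reflect_swaps_qr_set_qnr_set:
  assumes "odd n"
  shows "x \<in> qr_set \<Longrightarrow> p - x \<in> qnr_set" and "x \<in> qnr_set \<Longrightarrow> p - x \<in> qr_set"
proof -
  show "p - x \<in> qnr_set" if "x \<in> qr_set"
    using reflect_mem_qnr_set_iff[OF subsetD[OF qr_set_subset that]] that assms qr_set_Int_qnr_set
    by blast
  show "p - x \<in> qr_set" if "x \<in> qnr_set"
    using reflect_mem_qr_set_iff[OF subsetD[OF qnr_set_subset that]] that assms qr_set_Int_qnr_set
    by blast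
qed

lemma fact_cong_odd:
  assumes "odd n"
  shows "[fact n = (-1) ^ card {y \<in> qnr_set. y \<le> int n}] (mod p)"
proof -
  have "[(-1) ^ card {y \<in> qnr_set. y \<le> int n} * fact n = (\<Prod>x\<in>qr_set. x)] (mod p)"
    using prod_reflect_swap_cong[OF p_eq qr_set_Un_qnr_set qr_set_Int_qnr_set reflect_swaps_qr_set_qnr_set[OF assms]]
    by (rule cong_sym)
  also have "[(\<Prod>x\<in>qr_set. x) = 1] (mod p)" using prod_qr_cong_odd[OF assms] .
  finally show ?thesis by (simp add: mult.commute cong_mult_minus_one_power_iff)
qed

lemma vandermonde_prod_qr_qnr_cong_odd:
  assumes "odd n"
  shows "[vandermonde_prod qr_set * vandermonde_prod qnr_set = 1] (mod p)"
proof -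
  define N where "N = card {(x, y) \<in> qr_set \<times> qnr_set. x < y}"
  define c where "c = card {x \<in> qr_set. 2 * x < p}"
  define t where "t = card {y \<in> qnr_set. y \<le> int n}"
  have even_N_c: "even (N + c)"
    using even_card_less_pairs_reflect_swap[OF finite_qr_set finite_qnr_set reflect_swaps_qr_set_qnr_set[OF assms]]
    by (simp add: N_def c_def)
  have "c + t = n"
  proof -
    have "{x \<in> qr_set. 2 * x < p} \<union> {y \<in> qnr_set. y \<le> int n} = {1..int n}"
      "{x \<in> qr_set. 2 * x < p} \<inter> {y \<in> qnr_set. y \<le> int n} = {}"
      using qr_set_Un_qnr_set qr_set_Int_qnr_set p_eq by auto
    then show ?thesis
      using card_Un_disjoint[of "{x \<in> qr_set. 2 * x < p}" "{y \<in> qnr_set. y \<le> int n}"]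
      by (simp add: c_def t_def)
  qed
  then have "t + N + (N + c) = n + 2 * N" by simp
  with assms have "odd (t + N + (N + c))" by (simp only:) simp
  with even_N_c have "odd (t + N)" by (metis even_add)
  have "[vandermonde_prod qr_set * vandermonde_prod qnr_set = - fact n * (-1) ^ N] (mod p)"
    using vandermonde_prod_qr_qnr_cong by (simp only: N_def)
  also have "[- fact n * (-1) ^ N = - ((-1) ^ t) * (-1) ^ N] (mod p)"
    using fact_cong_odd[OF assms] by (intro cong_mult cong_refl) (simp add: t_def cong_minus_minus_iff)
  also have "- ((-1) ^ t) * (-1) ^ N = (1 :: int)"
    using \<open>odd (t + N)\<close> by (simp flip: power_add)
  finally show ?thesis .
qed

end

theorem corollary3p1:
  fixes p :: int and n :: nat
  assumes "prime p" and "p = 2 * int n + 1"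
  defines "a \<equiv> qr_list p" and "b \<equiv> qnr_list p"
  shows "[(\<Prod>k<n. \<Prod>j<k. (a ! k - a ! j) * (b ! k - b ! j))
           = (if [p = 1] (mod 4) then - fact n else 1)] (mod p)"
proof -
  interpret odd_prime p n using assms(1,2) by unfold_locales
  have "(\<Prod>k<n. \<Prod>j<k. (a ! k - a ! j) * (b ! k - b ! j)) =
      vandermonde_prod qr_set * vandermonde_prod qnr_set"
    using vandermonde_prod_sorted_list_of_set[OF finite_qr_set]
      vandermonde_prod_sorted_list_of_set[OF finite_qnr_set]
    by (simp add: a_def b_def qr_list_eq qnr_list_eq card_qr_set card_qnr_set prod.distrib)
  then show ?thesis
    using p_cong_1_mod_4_iff vandermonde_prod_qr_qnr_cong_even vandermonde_prod_qr_qnr_cong_odd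
    by auto
qed

end
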